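(* Let $P\in\mathrm{Sym}(n,\mathbb{R})$ be positive definite, $R\in\mathrm{Sym}(n,\mathbb{R})$, $Q\in\mathrm{Mat}(n,\mathbb{R})$, and for $\lambda\ge0$ let $B_\lambda=\begin{bmatrix}P^{-1}&-P^{-1}Q\\-Q^TP^{-1}&Q^TP^{-1}Q-R-\lambda I_n\end{bmatrix}$. Assume $JB_0$ is hyperbolic. Then for every $\lambda\ge0$ the spectral subspaces $V^+(JB_\lambda)$ and $V^-(JB_\lambda)$ are transversal to $L_D$, i.e. $V^\pm(JB_\lambda)\cap L_D=\{0\}$.
   Context: $J=\begin{bmatrix}0&-I_n\\ I_n&0\end{bmatrix}$; hyperbolic means no eigenvalue on the imaginary axis. $V^+(M)$ (resp. $V^-(M)$) is the real generalized eigenspace of $M$ for eigenvalues with positive (resp. negative) real part. $L_D=\mathbb{R}^n\times\{0\}\subset\mathbb{R}^{2n}$. *)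

theory Defs
  imports "HOL-Analysis.Analysis"
begin

text \<open>Vectors of R^(2n) are indexed by the type 'n + 'n: first block Inl, second block Inr.\<close>

definition block_mat ::
  "('a::zero)^'n^'n \<Rightarrow> 'a^'n^'n \<Rightarrow> 'a^'n^'n \<Rightarrow> 'a^'n^'n \<Rightarrow> 'a^('n+'n)^('n+'n)" where
  "block_mat A B C D = (\<chi> i j. case i of
      Inl a \<Rightarrow> (case j of Inl b \<Rightarrow> A$a$b | Inr b \<Rightarrow> B$a$b)
    | Inr a \<Rightarrow> (case j of Inl b \<Rightarrow> C$a$b | Inr b \<Rightarrow> D$a$b))"

definition Jmat :: "real^('n::finite+'n)^('n+'n)" where
  "Jmat = block_mat 0 (- mat 1) (mat 1) 0"

definition Bmat :: "real^'n^'n \<Rightarrow> real^'n^'n \<Rightarrow> real^'n^'n \<Rightarrow> real \<Rightarrow> real^('n::finite+'n)^('n+'n)" where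
  "Bmat P Q R lam = (let Pi = matrix_inv P in
     block_mat Pi (- (Pi ** Q)) (- (transpose Q ** Pi)) (transpose Q ** Pi ** Q - R - mat lam))"

definition cmat :: "real^'m^'m \<Rightarrow> complex^'m^'m" where
  "cmat M = (\<chi> i j. complex_of_real (M$i$j))"

definition cvec :: "real^'m \<Rightarrow> complex^'m" where
  "cvec v = (\<chi> i. complex_of_real (v$i))"

definition mpow :: "('a::comm_ring_1)^'m^'m \<Rightarrow> nat \<Rightarrow> 'a^'m^'m" where
  "mpow A k = (((**) A) ^^ k) (mat 1)"

definition is_eigenvalue :: "real^'m^'m \<Rightarrow> complex \<Rightarrow> bool" where
  "is_eigenvalue M \<mu> \<longleftrightarrow> (\<exists>v. v \<noteq> 0 \<and> cmat M *v v = \<mu> *s v)"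

definition hyperbolic :: "real^'m^'m \<Rightarrow> bool" where
  "hyperbolic M \<longleftrightarrow> (\<forall>\<mu>. is_eigenvalue M \<mu> \<longrightarrow> Re \<mu> \<noteq> 0)"

definition gen_eigenspace :: "real^'m^'m \<Rightarrow> complex \<Rightarrow> (complex^'m) set" where
  "gen_eigenspace M \<mu> = {w. \<exists>k. mpow (cmat M - mat \<mu>) k *v w = 0}"

text \<open>Real spectral subspace: real vectors lying in the sum of the complex generalized
  eigenspaces of eigenvalues mu with property S mu.\<close>
definition spec_subspace :: "(complex \<Rightarrow> bool) \<Rightarrow> real^'m^'m \<Rightarrow> (real^'m) set" where
  "spec_subspace S M = {v. \<exists>w :: complex \<Rightarrow> complex^'m.
      finite {\<mu>. w \<mu> \<noteq> 0} \<and>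
      (\<forall>\<mu>. w \<mu> \<noteq> 0 \<longrightarrow> S \<mu> \<and> w \<mu> \<in> gen_eigenspace M \<mu>) \<and>
      cvec v = (\<Sum>\<mu>\<in>{\<mu>. w \<mu> \<noteq> 0}. w \<mu>)}"

definition Vplus :: "real^'m^'m \<Rightarrow> (real^'m) set" where
  "Vplus M = spec_subspace (\<lambda>\<mu>. Re \<mu> > 0) M"

definition Vminus :: "real^'m^'m \<Rightarrow> (real^'m) set" where
  "Vminus M = spec_subspace (\<lambda>\<mu>. Re \<mu> < 0) M"

definition L_D :: "(real^('n::finite+'n)) set" where
  "L_D = {x. \<forall>i. x $ Inr i = 0}"

end

theory Submission
  imports Defs
begin

text \<open>
  Since \<open>B = B\<^sub>\<lambda>\<close> is symmetric and \<open>J\<^sup>T = -J\<close>, the matrix \<open>C = JB\<close> satisfies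
  \<open>C\<^sup>T B = -B C\<close>. For the complex bilinear (not sesquilinear) form \<open>\<beta>(w,z) = w\<^sup>T B z\<close> this gives
  \<open>\<beta>((C-\<mu>)w, z) + \<beta>(w, (C-\<nu>)z) = -(\<mu>+\<nu>) \<beta>(w,z)\<close>, so by induction on the nilpotency
  orders, generalized eigenvectors for eigenvalues with \<open>\<mu> + \<nu> \<noteq> 0\<close> are \<open>\<beta>\<close>-orthogonal.
  Hence \<open>V\<^sup>+(JB)\<close> and \<open>V\<^sup>-(JB)\<close> are isotropic for the quadratic form of \<open>B\<close>. On \<open>L\<^sub>D\<close> that
  form is \<open>u \<mapsto> u\<^sup>T P\<^sup>-\<^sup>1 u\<close>, which is positive definite, so the intersections are trivial.
\<close>

definition vdot :: "'a::comm_semiring_1^'m \<Rightarrow> 'a^'m \<Rightarrow> 'a" where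
  "vdot x y = (\<Sum>i\<in>UNIV. x$i * y$i)"

lemma vdot_matrix_vector_mult_left: "vdot (A *v x) y = vdot x (transpose A *v y)"
proof -
  have "vdot (A *v x) y = (\<Sum>i\<in>UNIV. \<Sum>j\<in>UNIV. A$i$j * x$j * y$i)"
    unfolding vdot_def matrix_vector_mult_def by (simp add: sum_distrib_right)
  also have "\<dots> = (\<Sum>j\<in>UNIV. \<Sum>i\<in>UNIV. A$i$j * x$j * y$i)"
    by (rule sum.swap)
  also have "\<dots> = vdot x (transpose A *v y)"
    unfolding vdot_def matrix_vector_mult_def transpose_def
    by (simp add: sum_distrib_left mult_ac)
  finally show ?thesis .
qed

lemma vdot_0_left [simp]: "vdot 0 y = 0"
  by (simp add: vdot_def)

lemma vdot_0_right [simp]: "vdot x 0 = 0"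
  by (simp add: vdot_def)

lemma vdot_diff_left: "vdot (x - y) z = vdot x z - vdot y (z::'a::comm_ring_1^'m)"
  unfolding vdot_def by (simp add: left_diff_distrib sum_subtractf)

lemma vdot_diff_right: "vdot x (y - z) = vdot x y - vdot x (z::'a::comm_ring_1^'m)"
  unfolding vdot_def by (simp add: right_diff_distrib sum_subtractf)

lemma vdot_smult_left: "vdot (c *s x) y = c * vdot x y"
  unfolding vdot_def by (simp add: sum_distrib_left mult_ac)

lemma vdot_smult_right: "vdot x (c *s y) = c * vdot x y"
  unfolding vdot_def by (simp add: sum_distrib_left mult_ac)

lemma vdot_uminus_right: "vdot x (- y) = - vdot x (y::'a::comm_ring_1^'m)"
  unfolding vdot_def by (simp add: sum_negf)

lemma vdot_sum_left: "vdot (sum f S) y = (\<Sum>s\<in>S. vdot (f s) y)"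
  unfolding vdot_def
  by (induction S rule: infinite_finite_induct) (auto simp: sum.distrib distrib_right)

lemma vdot_sum_right: "vdot x (sum f S) = (\<Sum>s\<in>S. vdot x (f s))"
  unfolding vdot_def
  by (induction S rule: infinite_finite_induct) (auto simp: sum.distrib distrib_left)

lemma mat_matrix_vector_mult: "mat c *v x = c *s x"
  by (simp add: vec_eq_iff matrix_vector_mult_def mat_def if_distrib if_distribR cong: if_cong)

lemma matrix_vector_mult_smult: "A *v (c *s (x::'a::comm_ring_1^'n)) = c *s (A *v x)"
  by (simp add: vec_eq_iff matrix_vector_mult_def sum_distrib_left mult_ac)

lemma matrix_vector_mult_uminus_left: "(- A) *v (x::'a::ring_1^'n) = - (A *v x)"
  by (simp add: vec_eq_iff matrix_vector_mult_def sum_negf)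

lemma matrix_vector_mult_sum_right: "A *v sum f S = (\<Sum>s\<in>S. A *v f s)"
  by (induction S rule: infinite_finite_induct) (auto simp: matrix_vector_right_distrib)

lemma matrix_mul_uminus_left: "(- A::'a::ring_1^'n^'m) ** B = - (A ** B)"
  by (simp add: vec_eq_iff matrix_matrix_mult_def sum_negf)

lemma matrix_mul_uminus_right: "(A::'a::ring_1^'n^'m) ** (- B) = - (A ** B)"
  by (simp add: vec_eq_iff matrix_matrix_mult_def sum_negf)

lemma transpose_uminus: "transpose (- (A::'a::ring_1^'n^'m)) = - transpose A"
  by (simp add: vec_eq_iff transpose_def)

lemma transpose_diff: "transpose ((A::'a::ring_1^'n^'m) - B) = transpose A - transpose B"
  by (simp add: vec_eq_iff transpose_def)

lemma mpow_Suc_right: "mpow A (Suc k) = mpow A k ** A"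
proof (induction k)
  case 0
  then show ?case by (simp add: mpow_def)
next
  case (Suc k)
  have "mpow A (Suc (Suc k)) = A ** mpow A (Suc k)" by (simp add: mpow_def)
  also have "\<dots> = (A ** mpow A k) ** A" using Suc by (simp add: matrix_mul_assoc)
  finally show ?case by (simp add: mpow_def)
qed

lemma mpow_Suc_matrix_vector_mult: "mpow A (Suc k) *v x = mpow A k *v (A *v x)"
  by (simp add: mpow_Suc_right matrix_vector_mul_assoc)

lemma mpow_0_matrix_vector_mult [simp]: "mpow A 0 *v x = x"
  by (simp add: mpow_def)

lemma vdot_shift_eigenvalues:
  assumes skew: "transpose C ** B = - (B ** C)"
  shows "vdot ((C - mat \<mu>) *v w) (B *v z) + vdot w (B *v ((C - mat \<nu>) *v z))
       = - (\<mu> + \<nu>) * vdot w (B *v (z::'a::comm_ring_1^'m))"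
proof -
  have "vdot (C *v w) (B *v z) = - vdot w (B *v (C *v z))"
    by (simp add: vdot_matrix_vector_mult_left matrix_vector_mul_assoc skew
        matrix_vector_mult_uminus_left vdot_uminus_right)
  then show ?thesis
    by (simp add: mat_matrix_vector_mult matrix_vector_mult_smult vdot_diff_left vdot_diff_right
        vdot_smult_left vdot_smult_right algebra_simps)
qed

lemma generalized_eigenvectors_vdot_orthogonal:
  fixes C B :: "'a::idom^'m^'m"
  assumes skew: "transpose C ** B = - (B ** C)" and sum_nonzero: "\<mu> + \<nu> \<noteq> 0"
  shows "mpow (C - mat \<mu>) k *v w = 0 \<Longrightarrow> mpow (C - mat \<nu>) l *v z = 0 \<Longrightarrow> vdot w (B *v z) = 0"
proof (induction k arbitrary: w z l)
  case 0
  then show ?case by simp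
next
  case (Suc k)
  have IH: "vdot ((C - mat \<mu>) *v w) (B *v z) = 0" if "mpow (C - mat \<nu>) l *v z = 0" for z l
    using Suc.IH Suc.prems(1) that by (simp add: mpow_Suc_matrix_vector_mult)
  have "vdot w (B *v z) = 0" if "mpow (C - mat \<nu>) l *v z = 0" for l z
    using that
  proof (induction l arbitrary: z)
    case 0
    then show ?case by simp
  next
    case (Suc l)
    then have "vdot w (B *v ((C - mat \<nu>) *v z)) = 0"
      by (simp add: mpow_Suc_matrix_vector_mult)
    with vdot_shift_eigenvalues[OF skew, of \<mu> w z \<nu>] IH[OF Suc.prems]
    have "(\<mu> + \<nu>) * vdot w (B *v z) = 0"
      by (metis add_0 minus_mult_left neg_equal_0_iff_equal)
    with sum_nonzero show ?case by (metis mult_eq_0_iff)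
  qed
  with Suc.prems(2) show ?case by blast
qed

lemma cmat_transpose: "cmat (transpose A) = transpose (cmat A)"
  by (simp add: vec_eq_iff cmat_def transpose_def)

lemma cmat_mult: "cmat (A ** B) = cmat A ** cmat B"
  by (simp add: vec_eq_iff cmat_def matrix_matrix_mult_def)

lemma cmat_uminus: "cmat (- A) = - cmat A"
  by (simp add: vec_eq_iff cmat_def)

lemma cmat_matrix_vector_mult_cvec: "cmat A *v cvec x = cvec (A *v x)"
  by (simp add: vec_eq_iff cmat_def cvec_def matrix_vector_mult_def)

lemma vdot_cvec: "vdot (cvec x) (cvec y) = complex_of_real (x \<bullet> y)"
  by (simp add: vdot_def cvec_def inner_vec_def)

lemma zero_in_spec_subspace: "0 \<in> spec_subspace S M"
  unfolding spec_subspace_def by (auto intro: exI[of _ "\<lambda>_. 0"] simp: cvec_def vec_eq_iff)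

lemma spec_subspace_isotropic:
  fixes M B :: "real^'m^'m"
  assumes skew: "transpose M ** B = - (B ** M)"
    and no_opposite: "\<And>\<mu> \<nu>. S \<mu> \<Longrightarrow> S \<nu> \<Longrightarrow> \<mu> + \<nu> \<noteq> 0"
    and v: "v \<in> spec_subspace S M"
  shows "v \<bullet> (B *v v) = 0"
proof -
  obtain w where w: "\<forall>\<mu>. w \<mu> \<noteq> 0 \<longrightarrow> S \<mu> \<and> w \<mu> \<in> gen_eigenspace M \<mu>"
    and v_sum: "cvec v = (\<Sum>\<mu>\<in>{\<mu>. w \<mu> \<noteq> 0}. w \<mu>)"
    using v unfolding spec_subspace_def by blast
  have cskew: "transpose (cmat M) ** cmat B = - (cmat B ** cmat M)"
    using arg_cong[OF skew, of cmat] by (simp add: cmat_mult cmat_uminus cmat_transpose)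
  have orth: "vdot (w \<mu>) (cmat B *v w \<nu>) = 0" if "w \<mu> \<noteq> 0" "w \<nu> \<noteq> 0" for \<mu> \<nu>
  proof -
    from w that obtain k l where "mpow (cmat M - mat \<mu>) k *v w \<mu> = 0"
      "mpow (cmat M - mat \<nu>) l *v w \<nu> = 0" "S \<mu>" "S \<nu>"
      unfolding gen_eigenspace_def by blast
    with no_opposite show ?thesis
      using generalized_eigenvectors_vdot_orthogonal[OF cskew] by blast
  qed
  have "vdot (cvec v) (cmat B *v cvec v) = 0"
    unfolding v_sum vdot_sum_left matrix_vector_mult_sum_right vdot_sum_right
    using orth by simp
  then show ?thesis
    by (simp add: cmat_matrix_vector_mult_cvec vdot_cvec)
qed

lemma sum_UNIV_Plus:
  "(\<Sum>i\<in>UNIV. f i) = (\<Sum>a\<in>UNIV. f (Inl a)) + (\<Sum>b\<in>UNIV. f (Inr b))"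
  for f :: "'a::finite + 'b::finite \<Rightarrow> 'c::comm_monoid_add"
  using sum.Plus[of "UNIV::'a set" "UNIV::'b set" f] by (simp add: comp_def)

lemma transpose_block_mat:
  "transpose (block_mat A B C D) = block_mat (transpose A) (transpose C) (transpose B) (transpose D)"
  by (simp add: vec_eq_iff transpose_def block_mat_def split: sum.split)

lemma transpose_Jmat: "transpose Jmat = - Jmat"
  by (auto simp: vec_eq_iff transpose_def Jmat_def block_mat_def mat_def split: sum.split)

lemma Jmat_mult_skew:
  assumes "transpose B = B"
  shows "transpose (Jmat ** B) ** B = - (B ** (Jmat ** B))"
  by (simp add: matrix_transpose_mul assms transpose_Jmat matrix_mul_uminus_left
      matrix_mul_uminus_right matrix_mul_assoc)

lemma invertible_matrix_inv:
  assumes "invertible A"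
  shows "A ** matrix_inv A = mat 1" "matrix_inv A ** A = mat 1"
  using someI_ex[of "\<lambda>A'. A ** A' = mat 1 \<and> A' ** A = mat 1"] assms
  unfolding matrix_inv_def invertible_def by blast+

lemma transpose_matrix_inv_symmetric:
  fixes A :: "'a::comm_semiring_1^'n^'n"
  assumes "transpose A = A" "invertible A"
  shows "transpose (matrix_inv A) = matrix_inv A"
proof -
  have left_inv: "transpose (matrix_inv A) ** A = mat 1"
    using arg_cong[OF invertible_matrix_inv(1)[OF assms(2)], of transpose]
    by (simp add: matrix_transpose_mul assms(1))
  have "transpose (matrix_inv A) = transpose (matrix_inv A) ** (A ** matrix_inv A)"
    by (simp add: invertible_matrix_inv[OF assms(2)])
  also have "\<dots> = matrix_inv A"
    by (simp add: matrix_mul_assoc left_inv)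
  finally show ?thesis .
qed

lemma positive_definite_invertible:
  fixes P :: "real^'n^'n"
  assumes "\<forall>x. x \<noteq> 0 \<longrightarrow> x \<bullet> (P *v x) > 0"
  shows "invertible P"
proof -
  have "\<forall>x. P *v x = 0 \<longrightarrow> x = 0"
    using assms by (metis inner_zero_right less_irrefl)
  then show ?thesis
    by (simp add: invertible_left_inverse matrix_left_invertible_ker)
qed

lemma positive_definite_matrix_inv:
  fixes P :: "real^'n^'n"
  assumes "transpose P = P" and pos: "\<forall>x. x \<noteq> 0 \<longrightarrow> x \<bullet> (P *v x) > 0"
    and "u \<noteq> 0"
  shows "u \<bullet> (matrix_inv P *v u) > 0"
proof -
  define v where "v = matrix_inv P *v u"
  have u: "u = P *v v"
    unfolding v_def
    by (simp add: matrix_vector_mul_assoc invertible_matrix_inv positive_definite_invertible[OF pos])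
  with \<open>u \<noteq> 0\<close> have "v \<noteq> 0" by auto
  with pos have "v \<bullet> (P *v v) > 0" by blast
  then show ?thesis
    unfolding v_def[symmetric] using u by (simp add: inner_commute)
qed

lemma Bmat_symmetric:
  assumes "transpose P = P" "invertible P" "transpose R = R"
  shows "transpose (Bmat P Q R lam) = Bmat P Q R lam"
  using transpose_matrix_inv_symmetric[OF assms(1,2)]
  by (simp add: Bmat_def Let_def transpose_block_mat transpose_uminus transpose_diff
      matrix_transpose_mul assms(3) matrix_mul_assoc)

lemma Bmat_quadratic_form_L_D:
  assumes "x \<in> L_D"
  shows "x \<bullet> (Bmat P Q R lam *v x) = (\<chi> a. x $ Inl a) \<bullet> (matrix_inv P *v (\<chi> a. x $ Inl a))"
proof -
  define u where "u = (\<chi> a. x $ Inl a)"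
  have x_Inr: "x $ Inr b = 0" for b
    using assms by (simp add: L_D_def)
  have Bx_Inl: "(Bmat P Q R lam *v x) $ Inl a = (matrix_inv P *v u) $ a" for a
    unfolding Bmat_def Let_def matrix_vector_mult_def
    by (simp add: sum_UNIV_Plus x_Inr u_def block_mat_def)
  show ?thesis
    unfolding u_def[symmetric] by (simp add: inner_vec_def sum_UNIV_Plus x_Inr Bx_Inl u_def)
qed

lemma L_D_eq_0:
  assumes "x \<in> L_D" "(\<chi> a. x $ Inl a) = 0"
  shows "x = 0"
proof -
  have "x $ i = 0" for i
    using assms by (cases i) (auto simp: L_D_def vec_eq_iff)
  then show ?thesis by (simp add: vec_eq_iff)
qed

lemma spec_subspace_Jmat_Bmat_inter_L_D:
  fixes P Q R :: "real^'n::finite^'n"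
  assumes P_sym: "transpose P = P"
    and P_pos: "\<forall>x. x \<noteq> 0 \<longrightarrow> x \<bullet> (P *v x) > 0"
    and R_sym: "transpose R = R"
    and no_opposite: "\<And>\<mu> \<nu>. S \<mu> \<Longrightarrow> S \<nu> \<Longrightarrow> \<mu> + \<nu> \<noteq> 0"
  shows "spec_subspace S (Jmat ** Bmat P Q R lam) \<inter> L_D = {0}"
proof -
  have skew: "transpose (Jmat ** Bmat P Q R lam) ** Bmat P Q R lam
      = - (Bmat P Q R lam ** (Jmat ** Bmat P Q R lam))"
    using Jmat_mult_skew Bmat_symmetric P_sym positive_definite_invertible[OF P_pos] R_sym
    by blast
  have "x = 0" if "x \<in> spec_subspace S (Jmat ** Bmat P Q R lam)" "x \<in> L_D" for x
  proof -
    have "x \<bullet> (Bmat P Q R lam *v x) = 0"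
      using spec_subspace_isotropic[OF skew no_opposite that(1)] .
    then have "(\<chi> a. x $ Inl a) = 0"
      using positive_definite_matrix_inv[OF P_sym P_pos] Bmat_quadratic_form_L_D[OF that(2)]
      by (metis less_irrefl)
    with L_D_eq_0 that(2) show ?thesis by blast
  qed
  moreover have "0 \<in> L_D" by (simp add: L_D_def)
  ultimately show ?thesis using zero_in_spec_subspace by blast
qed

theorem lemma4p1:
  fixes P Q R :: "real^'n::finite^'n"
  assumes "transpose P = P"
    and "\<forall>x. x \<noteq> 0 \<longrightarrow> x \<bullet> (P *v x) > 0"
    and "transpose R = R"
    and "hyperbolic (Jmat ** Bmat P Q R 0)"
    and "lam \<ge> 0"
  shows "Vplus (Jmat ** Bmat P Q R lam) \<inter> L_D = {0}
       \<and> Vminus (Jmat ** Bmat P Q R lam) \<inter> L_D = {0}"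
proof -
  have "\<mu> + \<nu> \<noteq> 0" if "Re \<mu> > 0" "Re \<nu> > 0" for \<mu> \<nu> :: complex
    using that by (auto simp: complex_eq_iff)
  then have "Vplus (Jmat ** Bmat P Q R lam) \<inter> L_D = {0}"
    unfolding Vplus_def by (rule spec_subspace_Jmat_Bmat_inter_L_D[OF assms(1-3)])
  moreover have "\<mu> + \<nu> \<noteq> 0" if "Re \<mu> < 0" "Re \<nu> < 0" for \<mu> \<nu> :: complex
    using that by (auto simp: complex_eq_iff)
  then have "Vminus (Jmat ** Bmat P Q R lam) \<inter> L_D = {0}"
    unfolding Vminus_def by (rule spec_subspace_Jmat_Bmat_inter_L_D[OF assms(1-3)])
  ultimately show ?thesis ..
qed

end
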